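(* Let $\Phi$ be a probabilistic cellular automaton on $\mathcal{A}^{\mathbb{Z}}$ of radius $r$, i.e. with neighborhood $\mathcal{N}\subset[\![-r,r]\!]$. Then the action $\mu\mapsto\Phi\mu$ is $2^r$-Lipschitz on $\mathcal{M}(\mathcal{A}^{\mathbb{Z}})$ for the distance $d_{\mathcal{M}}$, i.e. $d_{\mathcal{M}}(\Phi\mu,\Phi\nu)\le 2^r d_{\mathcal{M}}(\mu,\nu)$ for all $\mu,\nu\in\mathcal{M}(\mathcal{A}^{\mathbb{Z}})$.
   Context: $\mathcal{A}$ is a finite alphabet. A PCA with finite neighborhood $\mathcal{N}\subset\mathbb{Z}$ is given by a stochastic matrix $\varphi:\mathcal{A}^{\mathcal{N}}\times\mathcal{A}\to[0,1]$ (rows summing to $1$); its transition kernel is $\Phi(x,[w]_U)=\prod_{i\in U}\varphi(x_{i+\mathcal{N}},w_i)$ for finite $U\subset\mathbb{Z}$, $w\in\mathcal{A}^U$, and it acts on probability measures by $\Phi\mu(E)=\int\Phi(x,E)\,d\mu(x)$. $\mathcal{M}(\mathcal{A}^{\mathbb{Z}})$ is the set of shift-invariant Borel probability measures on $\mathcal{A}^{\mathbb{Z}}$, and $d_{\mathcal{M}}(\mu,\nu)=\sum_{n\ge0}2^{-n}\|\mu-\nu\|_{[-n,n]}$ with $\|\mu-\nu\|_U=\frac12\sum_{u\in\mathcal{A}^U}|\mu([u])-\nu([u])|$, $[u]$ the cylinder $\{x:x_U=u\}$. *)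

theory Defs
  imports "HOL-Probability.Probability"
begin

text \<open>Configuration space A^Z with its product (= Borel) sigma-algebra.\<close>
definition config_space :: "(int \<Rightarrow> 'a) measure" where
  "config_space = PiM UNIV (\<lambda>_::int. count_space (UNIV::'a set))"

definition cyl :: "int set \<Rightarrow> (int \<Rightarrow> 'a) \<Rightarrow> (int \<Rightarrow> 'a) set" where
  "cyl U u = {x. \<forall>i\<in>U. x i = u i}"

definition shift :: "(int \<Rightarrow> 'a) \<Rightarrow> (int \<Rightarrow> 'a)" where
  "shift x = (\<lambda>i. x (i + 1))"

definition shift_inv_measures :: "(int \<Rightarrow> 'a) measure set" where
  "shift_inv_measures = {\<mu>. sets \<mu> = sets config_space \<and> prob_space \<mu>
                              \<and> distr \<mu> config_space shift = \<mu>}"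

text \<open>Stochastic matrix phi : A^N x A -> [0,1]; patterns in A^N are
  extensional functions on N.\<close>
definition stochastic :: "int set \<Rightarrow> ((int \<Rightarrow> 'a::finite) \<Rightarrow> 'a \<Rightarrow> real) \<Rightarrow> bool" where
  "stochastic N \<phi> \<longleftrightarrow> (\<forall>u \<in> PiE N (\<lambda>_. UNIV).
       (\<forall>a. 0 \<le> \<phi> u a \<and> \<phi> u a \<le> 1) \<and> (\<Sum>a\<in>UNIV. \<phi> u a) = 1)"

definition local_pattern :: "int set \<Rightarrow> (int \<Rightarrow> 'a) \<Rightarrow> int \<Rightarrow> (int \<Rightarrow> 'a)" where
  "local_pattern N x i = (\<lambda>j\<in>N. x (i + j))"

text \<open>Transition kernel Phi(x, .): product over i of the law phi(x_{i+N}, .),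
  so that Phi(x,[w]_U) = prod_{i in U} phi(x_{i+N}, w_i).\<close>
definition pca_kernel :: "int set \<Rightarrow> ((int \<Rightarrow> 'a::finite) \<Rightarrow> 'a \<Rightarrow> real)
                          \<Rightarrow> (int \<Rightarrow> 'a) \<Rightarrow> (int \<Rightarrow> 'a) measure" where
  "pca_kernel N \<phi> x = PiM UNIV (\<lambda>i::int. point_measure (UNIV::'a set)
                          (\<lambda>a. ennreal (\<phi> (local_pattern N x i) a)))"

definition pca_act :: "int set \<Rightarrow> ((int \<Rightarrow> 'a::finite) \<Rightarrow> 'a \<Rightarrow> real)
                       \<Rightarrow> (int \<Rightarrow> 'a) measure \<Rightarrow> (int \<Rightarrow> 'a) measure" where
  "pca_act N \<phi> \<mu> = \<mu> \<bind> pca_kernel N \<phi>"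

definition cyl_dist :: "int set \<Rightarrow> (int \<Rightarrow> 'a::finite) measure \<Rightarrow> (int \<Rightarrow> 'a) measure \<Rightarrow> real" where
  "cyl_dist U \<mu> \<nu> = (1/2) * (\<Sum>u\<in>PiE U (\<lambda>_. UNIV).
        \<bar>measure \<mu> (cyl U u) - measure \<nu> (cyl U u)\<bar>)"

definition dM :: "(int \<Rightarrow> 'a::finite) measure \<Rightarrow> (int \<Rightarrow> 'a) measure \<Rightarrow> real" where
  "dM \<mu> \<nu> = (\<Sum>n::nat. (1/2)^n * cyl_dist {- int n..int n} \<mu> \<nu>)"

end

theory Submission imports Defs begin

(* The probability (Phi mu)[w]_U is the mu-average of Phi(x,[w]_U), which depends only on
   x restricted to V = U + N. Hence the vector ((Phi mu)[w]_U)_w is the image of the vector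
   (mu[v]_V)_v under a stochastic matrix, and stochastic matrices do not increase the
   l1-distance: ||Phi mu - Phi nu||_[-n,n] <= ||mu - nu||_[-n-r,n+r]. Shifting the index
   of the series defining d_M by r costs the factor 2^r. *)

definition depends_only_on :: "'i set \<Rightarrow> (('i \<Rightarrow> 'a) \<Rightarrow> 'b) \<Rightarrow> bool" where
  "depends_only_on V f \<longleftrightarrow> (\<forall>x y. (\<forall>j\<in>V. x j = y j) \<longrightarrow> f x = f y)"

definition transition_prob :: "int set \<Rightarrow> ((int \<Rightarrow> 'a) \<Rightarrow> 'a \<Rightarrow> real)
                               \<Rightarrow> int set \<Rightarrow> (int \<Rightarrow> 'a) \<Rightarrow> (int \<Rightarrow> 'a) \<Rightarrow> real" where
  "transition_prob N \<phi> U x w = (\<Prod>i\<in>U. \<phi> (local_pattern N x i) (w i))"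

lemma space_config_space: "space config_space = UNIV"
  unfolding config_space_def by (auto simp: space_PiM PiE_def extensional_def)

lemma space_eq_UNIV_if_sets_config_space: "sets \<mu> = sets config_space \<Longrightarrow> space \<mu> = UNIV"
  using sets_eq_imp_space_eq space_config_space by metis

lemma cyl_eq_prod_emb:
  assumes "\<And>i. space (M i) = UNIV"
  shows "cyl V v = prod_emb UNIV M V (PiE V (\<lambda>i. {v i}))"
  by (auto simp: prod_emb_def cyl_def assms PiE_def extensional_def restrict_def Pi_iff)

lemma cyl_in_sets_config_space: "finite V \<Longrightarrow> cyl V v \<in> sets config_space"
  unfolding cyl_eq_prod_emb[of "\<lambda>_. count_space UNIV", simplified] config_space_def
  by (intro sets_PiM_I) auto

lemma sum_indicator_cyl:
  fixes f :: "(int \<Rightarrow> 'a::finite) \<Rightarrow> 'b::semiring_1"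
  assumes "finite V" and "depends_only_on V f"
  shows "(\<Sum>v\<in>PiE V (\<lambda>_. UNIV). f v * indicator (cyl V v) x) = f x"
proof -
  have "x \<in> cyl V v \<longleftrightarrow> v = restrict x V" if "v \<in> PiE V (\<lambda>_. UNIV)" for v
    using that by (auto simp: cyl_def PiE_def extensional_def fun_eq_iff)
  then have "(\<Sum>v\<in>PiE V (\<lambda>_. UNIV). f v * indicator (cyl V v) x)
      = (\<Sum>v\<in>PiE V (\<lambda>_. UNIV). if v = restrict x V then f v else 0)"
    by (intro sum.cong) (auto simp: indicator_def)
  also have "\<dots> = f (restrict x V)"
    using \<open>finite V\<close> by (subst sum.delta) (auto intro: finite_PiE)
  also have "\<dots> = f x"
    using assms(2) by (auto simp: depends_only_on_def)
  finally show ?thesis .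
qed

lemma borel_measurable_depends_only_on:
  fixes f :: "(int \<Rightarrow> 'a::finite) \<Rightarrow> ennreal"
  assumes "finite V" and "depends_only_on V f"
  shows "f \<in> borel_measurable config_space"
proof -
  have "(\<lambda>x. \<Sum>v\<in>PiE V (\<lambda>_. UNIV). f v * indicator (cyl V v) x) \<in> borel_measurable config_space"
    using cyl_in_sets_config_space[OF \<open>finite V\<close>]
    by (intro borel_measurable_sum borel_measurable_times_ennreal borel_measurable_indicator) simp_all
  then show ?thesis
    by (simp only: sum_indicator_cyl[OF assms])
qed

lemma nn_integral_depends_only_on:
  fixes f :: "(int \<Rightarrow> 'a::finite) \<Rightarrow> ennreal"
  assumes "sets \<mu> = sets config_space" and "finite V" and "depends_only_on V f"
  shows "(\<integral>\<^sup>+x. f x \<partial>\<mu>) = (\<Sum>v\<in>PiE V (\<lambda>_. UNIV). f v * emeasure \<mu> (cyl V v))"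
proof -
  have cyl: "cyl V v \<in> sets \<mu>" for v
    using cyl_in_sets_config_space[OF \<open>finite V\<close>] assms(1) by simp
  have "(\<integral>\<^sup>+x. f x \<partial>\<mu>) = (\<integral>\<^sup>+x. (\<Sum>v\<in>PiE V (\<lambda>_. UNIV). f v * indicator (cyl V v) x) \<partial>\<mu>)"
    by (simp only: sum_indicator_cyl[OF assms(2,3)])
  also have "\<dots> = (\<Sum>v\<in>PiE V (\<lambda>_. UNIV). f v * emeasure \<mu> (cyl V v))"
    using cyl by (simp add: nn_integral_sum nn_integral_cmult_indicator)
  finally show ?thesis .
qed

lemma sum_measure_cyl:
  fixes \<mu> :: "(int \<Rightarrow> 'a::finite) measure"
  assumes "sets \<mu> = sets config_space" and "prob_space \<mu>" and "finite V"
  shows "(\<Sum>v\<in>PiE V (\<lambda>_. UNIV). measure \<mu> (cyl V v)) = 1"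
proof -
  interpret prob_space \<mu> by fact
  have "ennreal (\<Sum>v\<in>PiE V (\<lambda>_. UNIV). measure \<mu> (cyl V v)) = (\<integral>\<^sup>+x. 1 \<partial>\<mu>)"
    using nn_integral_depends_only_on[OF assms(1,3), of "\<lambda>_. 1"]
    by (simp add: depends_only_on_def emeasure_eq_measure)
  then show ?thesis
    by (simp add: emeasure_space_1)
qed

lemma local_pattern_in_PiE [simp]: "local_pattern N x i \<in> PiE N (\<lambda>_. UNIV)"
  unfolding local_pattern_def by simp

lemma local_pattern_cong:
  "(\<And>j. j \<in> N \<Longrightarrow> x (i + j) = y (i + j)) \<Longrightarrow> local_pattern N x i = local_pattern N y i"
  unfolding local_pattern_def by (intro restrict_ext) auto

lemma stochastic_nonneg: "stochastic N \<phi> \<Longrightarrow> 0 \<le> \<phi> (local_pattern N x i) a"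
  unfolding stochastic_def by simp

lemma stochastic_sum_eq_1: "stochastic N \<phi> \<Longrightarrow> (\<Sum>a\<in>UNIV. \<phi> (local_pattern N x i) a) = 1"
  unfolding stochastic_def by simp

lemma transition_prob_nonneg: "stochastic N \<phi> \<Longrightarrow> 0 \<le> transition_prob N \<phi> U x w"
  unfolding transition_prob_def by (intro prod_nonneg) (simp add: stochastic_nonneg)

lemma sum_transition_prob:
  fixes \<phi> :: "(int \<Rightarrow> 'a::finite) \<Rightarrow> 'a \<Rightarrow> real"
  assumes "stochastic N \<phi>" and "finite U"
  shows "(\<Sum>w\<in>PiE U (\<lambda>_. UNIV). transition_prob N \<phi> U x w) = 1"
proof -
  have "(\<Sum>w\<in>PiE U (\<lambda>_. UNIV). transition_prob N \<phi> U x w)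
      = (\<Prod>i\<in>U. \<Sum>a\<in>UNIV. \<phi> (local_pattern N x i) a)"
    unfolding transition_prob_def by (rule prod_sum_PiE[symmetric]) (simp_all add: assms)
  also have "\<dots> = 1"
    using assms(1) by (simp add: stochastic_sum_eq_1)
  finally show ?thesis .
qed

lemma depends_only_on_prod_local_pattern:
  assumes "\<And>i j. i \<in> U \<Longrightarrow> j \<in> N \<Longrightarrow> i + j \<in> V"
  shows "depends_only_on V (\<lambda>x. f (\<Prod>i\<in>U. g i (local_pattern N x i)))"
proof -
  have "(\<Prod>i\<in>U. g i (local_pattern N x i)) = (\<Prod>i\<in>U. g i (local_pattern N y i))"
    if "\<forall>j\<in>V. x j = y j" for x y
    using that assms by (intro prod.cong refl arg_cong[where f = "g _"] local_pattern_cong) auto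
  then show ?thesis
    unfolding depends_only_on_def by metis
qed

lemma emeasure_site_law:
  assumes "stochastic N \<phi>"
  shows "emeasure (point_measure UNIV (\<lambda>a. ennreal (\<phi> (local_pattern N x i) a))) X
     = ennreal (\<Sum>a\<in>X. \<phi> (local_pattern N x i) a)"
  using assms by (simp add: emeasure_point_measure_finite stochastic_nonneg sum_ennreal)

lemma prob_space_site_law:
  fixes \<phi> :: "(int \<Rightarrow> 'a::finite) \<Rightarrow> 'a \<Rightarrow> real"
  assumes "stochastic N \<phi>"
  shows "prob_space (point_measure UNIV (\<lambda>a. ennreal (\<phi> (local_pattern N x i) a)))"
  using assms
  by (intro prob_spaceI) (simp add: space_point_measure emeasure_site_law stochastic_sum_eq_1)

lemma prob_space_pca_kernel:
  fixes \<phi> :: "(int \<Rightarrow> 'a::finite) \<Rightarrow> 'a \<Rightarrow> real"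
  assumes "stochastic N \<phi>"
  shows "prob_space (pca_kernel N \<phi> x)"
  unfolding pca_kernel_def using assms by (intro prob_space_PiM prob_space_site_law)

lemma sets_pca_kernel: "sets (pca_kernel N \<phi> x) = sets config_space"
  unfolding pca_kernel_def config_space_def
  by (rule sets_PiM_cong) (auto simp: sets_point_measure)

lemma emeasure_pca_kernel_prod_emb:
  fixes \<phi> :: "(int \<Rightarrow> 'a::finite) \<Rightarrow> 'a \<Rightarrow> real"
  assumes "stochastic N \<phi>" and "finite J"
  shows "emeasure (pca_kernel N \<phi> x) (prod_emb UNIV (\<lambda>_. count_space UNIV) J (PiE J X))
    = ennreal (\<Prod>i\<in>J. \<Sum>a\<in>X i. \<phi> (local_pattern N x i) a)"
proof -
  define M where "M i = point_measure UNIV (\<lambda>a. ennreal (\<phi> (local_pattern N x i) a))" for i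
  have "prod_emb UNIV (\<lambda>_. count_space UNIV) J (PiE J X) = prod_emb UNIV M J (PiE J X)"
    by (simp add: prod_emb_def M_def space_point_measure)
  moreover have "pca_kernel N \<phi> x = PiM UNIV M"
    unfolding pca_kernel_def M_def ..
  moreover have "emeasure (PiM UNIV M) (prod_emb UNIV M J (PiE J X)) = (\<Prod>i\<in>J. emeasure (M i) (X i))"
    using assms by (intro emeasure_PiM_emb) (simp_all add: M_def sets_point_measure prob_space_site_law)
  ultimately have "emeasure (pca_kernel N \<phi> x) (prod_emb UNIV (\<lambda>_. count_space UNIV) J (PiE J X))
      = (\<Prod>i\<in>J. emeasure (M i) (X i))"
    by simp
  also have "\<dots> = ennreal (\<Prod>i\<in>J. \<Sum>a\<in>X i. \<phi> (local_pattern N x i) a)"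
    using assms(1) unfolding M_def
    by (simp add: emeasure_site_law prod_ennreal sum_nonneg stochastic_nonneg)
  finally show ?thesis .
qed

lemma emeasure_pca_kernel_cyl:
  fixes \<phi> :: "(int \<Rightarrow> 'a::finite) \<Rightarrow> 'a \<Rightarrow> real"
  assumes "stochastic N \<phi>" and "finite U"
  shows "emeasure (pca_kernel N \<phi> x) (cyl U w) = ennreal (transition_prob N \<phi> U x w)"
  unfolding cyl_eq_prod_emb[of "\<lambda>_. count_space UNIV", simplified] transition_prob_def
  using emeasure_pca_kernel_prod_emb[OF assms] by simp

lemma measurable_pca_kernel:
  fixes \<phi> :: "(int \<Rightarrow> 'a::finite) \<Rightarrow> 'a \<Rightarrow> real"
  assumes "stochastic N \<phi>" and "finite N"
  shows "pca_kernel N \<phi> \<in> measurable config_space (subprob_algebra config_space)"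
proof (rule measurable_subprob_algebra_generated[where \<Omega> = "PiE UNIV (\<lambda>_. UNIV)"
      and G = "prod_algebra UNIV (\<lambda>_::int. count_space (UNIV::'a set))"])
  show "sets config_space = sigma_sets (PiE UNIV (\<lambda>_. UNIV)) (prod_algebra UNIV (\<lambda>_. count_space UNIV))"
    unfolding config_space_def using sets_PiM[of UNIV "\<lambda>_. count_space UNIV"] by simp
  show "Int_stable (prod_algebra UNIV (\<lambda>_. count_space UNIV))"
    by (rule Int_stable_prod_algebra)
  show "prod_algebra UNIV (\<lambda>_. count_space UNIV) \<subseteq> Pow (PiE UNIV (\<lambda>_. UNIV))"
    using prod_algebra_sets_into_space[of UNIV "\<lambda>_. count_space UNIV"] by simp
  fix x
  show "subprob_space (pca_kernel N \<phi> x)"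
    using prob_space_pca_kernel[OF assms(1)] by (rule prob_space_imp_subprob_space)
  show "sets (pca_kernel N \<phi> x) = sets config_space"
    by (rule sets_pca_kernel)
next
  fix A assume "A \<in> prod_algebra UNIV (\<lambda>_::int. count_space (UNIV::'a set))"
  then obtain J E where A: "A = prod_emb UNIV (\<lambda>_. count_space UNIV) J (PiE J E)" and "finite J"
    by (rule prod_algebraE) blast
  have "depends_only_on (\<Union>i\<in>J. (+) i ` N)
      (\<lambda>x. ennreal (\<Prod>i\<in>J. \<Sum>a\<in>E i. \<phi> (local_pattern N x i) a))"
    by (rule depends_only_on_prod_local_pattern[where g = "\<lambda>i p. \<Sum>a\<in>E i. \<phi> p a"]) auto
  then have "(\<lambda>x. ennreal (\<Prod>i\<in>J. \<Sum>a\<in>E i. \<phi> (local_pattern N x i) a)) \<in> borel_measurable config_space"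
    using \<open>finite J\<close> \<open>finite N\<close> by (intro borel_measurable_depends_only_on) auto
  then show "(\<lambda>x. emeasure (pca_kernel N \<phi> x) A) \<in> borel_measurable config_space"
    unfolding A by (simp add: emeasure_pca_kernel_prod_emb[OF assms(1) \<open>finite J\<close>])
next
  have "emeasure (pca_kernel N \<phi> x) (PiE UNIV (\<lambda>_. UNIV)) = 1" for x
  proof -
    interpret prob_space "pca_kernel N \<phi> x"
      using assms(1) by (rule prob_space_pca_kernel)
    show ?thesis
      using emeasure_space_1 space_eq_UNIV_if_sets_config_space[OF sets_pca_kernel[of N \<phi> x]]
      by simp
  qed
  then show "(\<lambda>x. emeasure (pca_kernel N \<phi> x) (PiE UNIV (\<lambda>_. UNIV))) \<in> borel_measurable config_space"
    by simp
qed

lemma measure_pca_act_cyl: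
  fixes \<phi> :: "(int \<Rightarrow> 'a::finite) \<Rightarrow> 'a \<Rightarrow> real" and \<mu> :: "(int \<Rightarrow> 'a) measure"
  assumes \<phi>: "stochastic N \<phi>" "finite N"
    and \<mu>: "sets \<mu> = sets config_space" "prob_space \<mu>"
    and "finite U" and "finite V" and "\<And>i j. i \<in> U \<Longrightarrow> j \<in> N \<Longrightarrow> i + j \<in> V"
  shows "measure (pca_act N \<phi> \<mu>) (cyl U w)
     = (\<Sum>v\<in>PiE V (\<lambda>_. UNIV). transition_prob N \<phi> U v w * measure \<mu> (cyl V v))"
proof -
  interpret prob_space \<mu> by fact
  have "space \<mu> \<noteq> {}"
    using space_eq_UNIV_if_sets_config_space[OF \<mu>(1)] by simp
  moreover have "pca_kernel N \<phi> \<in> measurable \<mu> (subprob_algebra config_space)"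
    using measurable_pca_kernel[OF \<phi>] by (simp add: measurable_cong_sets[OF \<mu>(1) refl])
  ultimately have "emeasure (pca_act N \<phi> \<mu>) (cyl U w)
      = (\<integral>\<^sup>+x. emeasure (pca_kernel N \<phi> x) (cyl U w) \<partial>\<mu>)"
    unfolding pca_act_def by (rule emeasure_bind) (rule cyl_in_sets_config_space[OF \<open>finite U\<close>])
  also have "\<dots> = (\<integral>\<^sup>+x. ennreal (transition_prob N \<phi> U x w) \<partial>\<mu>)"
    by (simp add: emeasure_pca_kernel_cyl[OF \<phi>(1) \<open>finite U\<close>])
  also have "\<dots> = (\<Sum>v\<in>PiE V (\<lambda>_. UNIV). ennreal (transition_prob N \<phi> U v w) * emeasure \<mu> (cyl V v))"
    unfolding transition_prob_def
    by (intro nn_integral_depends_only_on \<mu>(1) \<open>finite V\<close>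
        depends_only_on_prod_local_pattern[where g = "\<lambda>i p. \<phi> p (w i)"]) fact
  also have "\<dots> = ennreal (\<Sum>v\<in>PiE V (\<lambda>_. UNIV). transition_prob N \<phi> U v w * measure \<mu> (cyl V v))"
    using \<phi>(1)
    by (simp add: emeasure_eq_measure transition_prob_nonneg sum_ennreal flip: ennreal_mult)
  finally show ?thesis
    using \<phi>(1) by (simp add: measure_def transition_prob_nonneg sum_nonneg)
qed

lemma cyl_dist_pca_act_le:
  fixes \<phi> :: "(int \<Rightarrow> 'a::finite) \<Rightarrow> 'a \<Rightarrow> real" and \<mu> \<nu> :: "(int \<Rightarrow> 'a) measure"
  assumes \<phi>: "stochastic N \<phi>" "finite N"
    and \<mu>: "sets \<mu> = sets config_space" "prob_space \<mu>"
    and \<nu>: "sets \<nu> = sets config_space" "prob_space \<nu>"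
    and "finite U" and "finite V" and UNV: "\<And>i j. i \<in> U \<Longrightarrow> j \<in> N \<Longrightarrow> i + j \<in> V"
  shows "cyl_dist U (pca_act N \<phi> \<mu>) (pca_act N \<phi> \<nu>) \<le> cyl_dist V \<mu> \<nu>"
proof -
  define P where "P w v = transition_prob N \<phi> U v w" for w v
  define m where "m v = measure \<mu> (cyl V v) - measure \<nu> (cyl V v)" for v
  have P_nonneg: "0 \<le> P w v" for w v
    unfolding P_def using \<phi>(1) by (rule transition_prob_nonneg)
  have diff: "measure (pca_act N \<phi> \<mu>) (cyl U w) - measure (pca_act N \<phi> \<nu>) (cyl U w)
      = (\<Sum>v\<in>PiE V (\<lambda>_. UNIV). P w v * m v)" for w
    using measure_pca_act_cyl[OF \<phi> \<mu> \<open>finite U\<close> \<open>finite V\<close> UNV]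
      measure_pca_act_cyl[OF \<phi> \<nu> \<open>finite U\<close> \<open>finite V\<close> UNV]
    unfolding P_def m_def by (simp add: sum_subtractf right_diff_distrib)
  have "(\<Sum>w\<in>PiE U (\<lambda>_. UNIV). \<bar>\<Sum>v\<in>PiE V (\<lambda>_. UNIV). P w v * m v\<bar>)
      \<le> (\<Sum>w\<in>PiE U (\<lambda>_. UNIV). \<Sum>v\<in>PiE V (\<lambda>_. UNIV). P w v * \<bar>m v\<bar>)"
    by (intro sum_mono order.trans[OF sum_abs]) (simp add: abs_mult P_nonneg)
  also have "\<dots> = (\<Sum>v\<in>PiE V (\<lambda>_. UNIV). (\<Sum>w\<in>PiE U (\<lambda>_. UNIV). P w v) * \<bar>m v\<bar>)"
    by (subst sum.swap) (simp add: sum_distrib_right)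
  also have "\<dots> = (\<Sum>v\<in>PiE V (\<lambda>_. UNIV). \<bar>m v\<bar>)"
    unfolding P_def by (simp add: sum_transition_prob[OF \<phi>(1) \<open>finite U\<close>])
  finally show ?thesis
    unfolding cyl_dist_def diff m_def by simp
qed

lemma cyl_dist_nonneg: "0 \<le> cyl_dist V \<mu> \<nu>"
  unfolding cyl_dist_def by (simp add: sum_nonneg)

lemma cyl_dist_le_1:
  fixes \<mu> \<nu> :: "(int \<Rightarrow> 'a::finite) measure"
  assumes "sets \<mu> = sets config_space" "prob_space \<mu>"
    and "sets \<nu> = sets config_space" "prob_space \<nu>" and "finite V"
  shows "cyl_dist V \<mu> \<nu> \<le> 1"
proof -
  have "(\<Sum>v\<in>PiE V (\<lambda>_. UNIV). \<bar>measure \<mu> (cyl V v) - measure \<nu> (cyl V v)\<bar>)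
     \<le> (\<Sum>v\<in>PiE V (\<lambda>_. UNIV). measure \<mu> (cyl V v) + measure \<nu> (cyl V v))"
    by (intro sum_mono) (simp add: abs_le_iff)
  also have "\<dots> = 2"
    using sum_measure_cyl[OF assms(1,2,5)] sum_measure_cyl[OF assms(3,4,5)]
    by (simp add: sum.distrib)
  finally show ?thesis
    unfolding cyl_dist_def by simp
qed

lemma suminf_halves_shift_le:
  fixes c d :: "nat \<Rightarrow> real"
  assumes "\<And>n. 0 \<le> d n" and "\<And>n. d n \<le> c (n + r)" and "\<And>n. 0 \<le> c n"
    and summable: "summable (\<lambda>n. (1/2)^n * c n)"
  shows "(\<Sum>n. (1/2)^n * d n) \<le> 2^r * (\<Sum>n. (1/2)^n * c n)"
proof -
  define g where "g n = (1/2::real)^n * c n" for n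
  have summable_g: "summable g"
    using summable unfolding g_def .
  then have "summable (\<lambda>n. g (n + r))"
    by (rule summable_ignore_initial_segment)
  then have summable_shift: "summable (\<lambda>n. 2^r * g (n + r))"
    by (rule summable_mult)
  have g_nonneg: "0 \<le> g n" for n
    unfolding g_def using assms(3) by simp
  have bound: "(1/2)^n * d n \<le> 2^r * g (n + r)" for n
  proof -
    have "(1/2::real)^n * d n \<le> (1/2)^n * c (n + r)"
      using assms(2) by (simp add: mult_left_mono)
    also have "\<dots> = 2^r * g (n + r)"
      unfolding g_def by (simp add: power_add power_one_over)
    finally show ?thesis .
  qed
  have "(\<Sum>n. (1/2)^n * d n) \<le> (\<Sum>n. 2^r * g (n + r))"
    using bound summable_shift assms(1) g_nonneg
    by (intro suminf_le summable_comparison_test'[OF summable_shift]) auto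
  also have "\<dots> = 2^r * ((\<Sum>n. g n) - (\<Sum>i<r. g i))"
    using summable_g by (simp add: suminf_minus_initial_segment[symmetric] suminf_mult)
  also have "\<dots> \<le> 2^r * (\<Sum>n. g n)"
    using g_nonneg by (simp add: sum_nonneg)
  finally show ?thesis
    unfolding g_def .
qed

lemma summable_cyl_dist_series:
  fixes \<mu> \<nu> :: "(int \<Rightarrow> 'a::finite) measure"
  assumes "sets \<mu> = sets config_space" "prob_space \<mu>"
    and "sets \<nu> = sets config_space" "prob_space \<nu>"
  shows "summable (\<lambda>n. (1/2::real)^n * cyl_dist {- int n..int n} \<mu> \<nu>)"
proof (rule summable_comparison_test'[OF summable_geometric[of "1/2"]])
  fix n
  have "0 \<le> cyl_dist {- int n..int n} \<mu> \<nu>" "cyl_dist {- int n..int n} \<mu> \<nu> \<le> 1"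
    using cyl_dist_nonneg cyl_dist_le_1[OF assms] by auto
  then show "norm ((1/2::real)^n * cyl_dist {- int n..int n} \<mu> \<nu>) \<le> (1/2)^n"
    by (simp add: mult_left_le)
qed simp

theorem mainTheorem4:
  fixes N :: "int set" and r :: nat
    and \<phi> :: "(int \<Rightarrow> 'a::finite) \<Rightarrow> 'a \<Rightarrow> real"
    and \<mu> \<nu> :: "(int \<Rightarrow> 'a) measure"
  assumes "N \<subseteq> {- int r..int r}"
    and "stochastic N \<phi>"
    and "\<mu> \<in> shift_inv_measures" and "\<nu> \<in> shift_inv_measures"
  shows "dM (pca_act N \<phi> \<mu>) (pca_act N \<phi> \<nu>) \<le> 2 ^ r * dM \<mu> \<nu>"
proof -
  have "finite N"
    using assms(1) finite_subset by blast
  have \<mu>: "sets \<mu> = sets config_space" "prob_space \<mu>"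
    and \<nu>: "sets \<nu> = sets config_space" "prob_space \<nu>"
    using assms(3,4) unfolding shift_inv_measures_def by auto
  have "cyl_dist {- int n..int n} (pca_act N \<phi> \<mu>) (pca_act N \<phi> \<nu>)
      \<le> cyl_dist {- int (n + r)..int (n + r)} \<mu> \<nu>" for n
    using assms(1) by (intro cyl_dist_pca_act_le[OF assms(2) \<open>finite N\<close> \<mu> \<nu>]) auto
  then show ?thesis
    unfolding dM_def
    by (intro suminf_halves_shift_le cyl_dist_nonneg summable_cyl_dist_series[OF \<mu> \<nu>])
qed

end
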